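(* Let $r\ge1$ and $n\ge2r$. For every integer $p\ge1$, the restricted Casimir polynomial $C_p(x_1,\dots,x_r)$ lies in the subalgebra $$\mathbb{C}\bigl[\,p_{2k}(x_1+\rho_1,\dots,x_r+\rho_r)\;:\;1\le k\le \lfloor p/2\rfloor\,\bigr]$$ of $\mathbb{C}[x_1,\dots,x_r]$ generated by constants and these even power sums.
   Context: $\rho_i=\frac{n-(2i-1)}{2}$ for $1\le i\le r$, and $p_k(y_1,\dots,y_r)=\sum_j y_j^k$. Casimir eigenvalues. For $\nu=(\nu_1,\dots,\nu_n)$ and an integer $p\ge 0$, let $$c_p(\nu)=\sum_{i=1}^n(\nu_i+n-i)^p\prod_{j\ne i}\Bigl(1-\frac{1}{\nu_i-\nu_j+j-i}\Bigr).$$ This rational expression is in fact a polynomial in $\nu$; it is the eigenvalue of the higher Casimir operator $\mathrm{tr}(\mathbf E^p)$ of $\mathfrak{gl}_n$ on the irreducible module of highest weight $\nu$. The restricted Casimir polynomial is $$C_p(x_1,\dots,x_r)=c_p(x_1,\dots,x_r,\underbrace{0,\dots,0}_{n-2r},-x_r,\dots,-x_1).$$ *)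

theory Defs
  imports Complex_Main
begin

text \<open>Weights are functions nat => complex, used on indices 1..n.\<close>

definition casimir_c :: "nat \<Rightarrow> nat \<Rightarrow> (nat \<Rightarrow> complex) \<Rightarrow> complex" where
  "casimir_c n p \<nu> =
     (\<Sum>i\<in>{1..n}. (\<nu> i + of_nat n - of_nat i) ^ p *
        (\<Prod>j\<in>{1..n} - {i}. (1 - 1 / (\<nu> i - \<nu> j + of_nat j - of_nat i))))"

text \<open>Denominators of the rational expression are all nonzero.\<close>
definition casimir_generic :: "nat \<Rightarrow> (nat \<Rightarrow> complex) \<Rightarrow> bool" where
  "casimir_generic n \<nu> =
     (\<forall>i\<in>{1..n}. \<forall>j\<in>{1..n}. i \<noteq> j \<longrightarrow> \<nu> i - \<nu> j + of_nat j - of_nat i \<noteq> 0)"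

definition restr_weight :: "nat \<Rightarrow> nat \<Rightarrow> (nat \<Rightarrow> complex) \<Rightarrow> nat \<Rightarrow> complex" where
  "restr_weight n r x i = (if i \<le> r then x i else if i \<le> n - r then 0 else - x (n + 1 - i))"

definition rho :: "nat \<Rightarrow> nat \<Rightarrow> complex" where
  "rho n i = (of_nat n - (2 * of_nat i - 1)) / 2"

definition psum :: "nat \<Rightarrow> nat \<Rightarrow> (nat \<Rightarrow> complex) \<Rightarrow> complex" where
  "psum r k y = (\<Sum>j\<in>{1..r}. y j ^ k)"

end

theory Submission
  imports Defs "HOL-Computational_Algebra.Formal_Power_Series"
begin

text \<open>
  Put \<open>l\<^sub>i = \<nu>\<^sub>i + n - i\<close>. Then \<open>c\<^sub>p(\<nu>) = \<Sum>\<^sub>i W\<^sub>i l\<^sub>i\<^sup>p\<close> with \<open>W\<^sub>i = \<Prod>\<^sub>j\<^sub>\<noteq>\<^sub>i (1 - 1/(l\<^sub>i - l\<^sub>j))\<close>,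
  and these \<open>W\<^sub>i\<close> are exactly the partial-fraction coefficients of \<open>\<Prod>\<^sub>i (1 - 1/(z - l\<^sub>i))\<close>.
  Expanding in \<open>X = 1/z\<close>, the Casimir eigenvalues are, up to sign, the coefficients of the
  power series \<open>\<Phi> = \<Prod>\<^sub>i (1 - (l\<^sub>i + 1) X) / (1 - l\<^sub>i X)\<close>. Its logarithmic derivative is
  \<open>\<Sum>\<^sub>m \<lambda>\<^sub>m X\<^sup>m\<close> with \<open>\<lambda>\<^sub>m = \<Sum>\<^sub>i (l\<^sub>i\<^bsup>m+1\<^esup> - (l\<^sub>i + 1)\<^bsup>m+1\<^esup>)\<close>, a combination of the power sums
  \<open>\<Sum>\<^sub>i l\<^sub>i\<^sup>k\<close>, \<open>k \<le> m\<close>. For the restricted weight, \<open>l\<^sub>i - (n-1)/2 = \<nu>\<^sub>i + \<rho>\<^sub>i\<close> is antisymmetric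
  under \<open>i \<mapsto> n + 1 - i\<close>, so the odd power sums of these shifted values are constant and the even
  ones of degree \<open>2k\<close> are \<open>2 p\<^sub>2\<^sub>k(x + \<rho>)\<close> plus a constant. Hence \<open>\<lambda>\<^sub>m\<close> is a polynomial in the
  \<open>p\<^sub>2\<^sub>k(x + \<rho>)\<close> with \<open>k \<le> m/2\<close>, and the recursion \<open>(N+1) \<Phi>\<^sub>N\<^sub>+\<^sub>1 = \<Sum>\<^sub>i \<Phi>\<^sub>i \<lambda>\<^sub>N\<^sub>-\<^sub>i\<close>
  coming from \<open>\<Phi>' = \<Phi> \<Sum>\<^sub>m \<lambda>\<^sub>m X\<^sup>m\<close> transfers this to \<open>\<Phi>\<^sub>p\<^sub>+\<^sub>1 = -c\<^sub>p\<close>.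
\<close>

section \<open>Polynomial expressions in a family of generators\<close>

definition gen_monomial :: "(nat \<Rightarrow> 'x \<Rightarrow> complex) \<Rightarrow> nat \<Rightarrow> (nat \<Rightarrow> nat) \<Rightarrow> 'x \<Rightarrow> complex" where
  "gen_monomial P m e x = (\<Prod>k\<in>{1..m}. P k x ^ e k)"

definition polynomial_in :: "(nat \<Rightarrow> 'x \<Rightarrow> complex) \<Rightarrow> nat \<Rightarrow> ('x \<Rightarrow> complex) \<Rightarrow> bool" where
  "polynomial_in P m f \<longleftrightarrow>
     (\<exists>S c. finite S \<and> (\<forall>x. f x = (\<Sum>e\<in>S. c e * gen_monomial P m e x)))"

lemma polynomial_inI:
  assumes "finite I" and "\<And>x. f x = (\<Sum>i\<in>I. a i * gen_monomial P m (e i) x)"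
  shows "polynomial_in P m f"
  unfolding polynomial_in_def
proof (intro exI conjI allI)
  show "finite (e ` I)" using assms(1) by simp
  fix x
  have "f x = (\<Sum>d\<in>e ` I. \<Sum>i\<in>{i \<in> I. e i = d}. a i * gen_monomial P m (e i) x)"
    using assms by (simp add: sum.image_gen[OF assms(1), of _ e])
  also have "\<dots> = (\<Sum>d\<in>e ` I. (\<Sum>i\<in>{i \<in> I. e i = d}. a i) * gen_monomial P m d x)"
    by (intro sum.cong refl) (simp add: sum_distrib_right)
  finally show "f x = (\<Sum>d\<in>e ` I. (\<lambda>d. \<Sum>i\<in>{i \<in> I. e i = d}. a i) d * gen_monomial P m d x)" .
qed

lemma polynomial_inE:
  assumes "polynomial_in P m f"
  obtains S c where "finite S" "\<And>x. f x = (\<Sum>e\<in>S. c e * gen_monomial P m e x)"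
  using assms unfolding polynomial_in_def by blast

lemma polynomial_in_const: "polynomial_in P m (\<lambda>x. c)"
  by (rule polynomial_inI[of "{()}" _ "\<lambda>_. c" _ _ "\<lambda>_ _. 0"]) (auto simp: gen_monomial_def)

lemma polynomial_in_generator:
  assumes "1 \<le> k" "k \<le> m"
  shows "polynomial_in P m (P k)"
proof (rule polynomial_inI[of "{()}" _ "\<lambda>_. 1" _ _ "\<lambda>_ j. if j = k then 1 else 0"])
  fix x
  have "gen_monomial P m (\<lambda>j. if j = k then 1 else 0) x = (\<Prod>j\<in>{1..m}. if j = k then P k x else 1)"
    unfolding gen_monomial_def by (intro prod.cong refl) auto
  also have "\<dots> = P k x" using assms by (simp add: prod.delta)
  finally show "P k x = (\<Sum>i\<in>{()}. 1 * gen_monomial P m (\<lambda>j. if j = k then 1 else 0) x)" by simp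
qed simp

lemma polynomial_in_add:
  assumes "polynomial_in P m f" "polynomial_in P m g"
  shows "polynomial_in P m (\<lambda>x. f x + g x)"
proof -
  obtain S1 c1 where 1: "finite S1" "\<And>x. f x = (\<Sum>e\<in>S1. c1 e * gen_monomial P m e x)"
    using assms(1) by (elim polynomial_inE) blast
  obtain S2 c2 where 2: "finite S2" "\<And>x. g x = (\<Sum>e\<in>S2. c2 e * gen_monomial P m e x)"
    using assms(2) by (elim polynomial_inE) blast
  show ?thesis
    by (rule polynomial_inI[of "S1 <+> S2" _ "case_sum c1 c2" _ _ "case_sum id id"])
       (auto simp: 1 2 sum.Plus comp_def)
qed

lemma gen_monomial_add:
  "gen_monomial P m (\<lambda>k. e k + e' k) x = gen_monomial P m e x * gen_monomial P m e' x"
  by (simp add: gen_monomial_def power_add prod.distrib)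

lemma polynomial_in_mult:
  assumes "polynomial_in P m f" "polynomial_in P m g"
  shows "polynomial_in P m (\<lambda>x. f x * g x)"
proof -
  obtain S1 c1 where 1: "finite S1" "\<And>x. f x = (\<Sum>e\<in>S1. c1 e * gen_monomial P m e x)"
    using assms(1) by (elim polynomial_inE) blast
  obtain S2 c2 where 2: "finite S2" "\<And>x. g x = (\<Sum>e\<in>S2. c2 e * gen_monomial P m e x)"
    using assms(2) by (elim polynomial_inE) blast
  show ?thesis
  proof (rule polynomial_inI[of "S1 \<times> S2" _ "\<lambda>(e, e'). c1 e * c2 e'" _ _ "\<lambda>(e, e') k. e k + e' k"])
    show "finite (S1 \<times> S2)" using 1 2 by simp
    fix x
    show "f x * g x = (\<Sum>i\<in>S1 \<times> S2. (case i of (e, e') \<Rightarrow> c1 e * c2 e') *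
                        gen_monomial P m (case i of (e, e') \<Rightarrow> \<lambda>k. e k + e' k) x)"
      unfolding 1 2 sum_product sum.cartesian_product
      by (intro sum.cong refl) (auto simp: gen_monomial_add)
  qed
qed

lemma polynomial_in_scale:
  assumes "polynomial_in P m f"
  shows "polynomial_in P m (\<lambda>x. c * f x)"
  using polynomial_in_mult[OF polynomial_in_const assms] .

lemma polynomial_in_sum:
  assumes "finite I" "\<And>i. i \<in> I \<Longrightarrow> polynomial_in P m (f i)"
  shows "polynomial_in P m (\<lambda>x. \<Sum>i\<in>I. f i x)"
  using assms
proof (induction I rule: finite_induct)
  case empty
  then show ?case using polynomial_in_const[of P m 0] by simp
next
  case (insert a F)
  then show ?case by (simp add: polynomial_in_add)
qed

lemma polynomial_in_mono:
  assumes "polynomial_in P m f" "m \<le> m'"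
  shows "polynomial_in P m' f"
proof -
  obtain S c where S: "finite S" "\<And>x. f x = (\<Sum>e\<in>S. c e * gen_monomial P m e x)"
    using assms(1) by (elim polynomial_inE) blast
  have "gen_monomial P m e x = gen_monomial P m' (\<lambda>k. if k \<le> m then e k else 0) x" for e x
    unfolding gen_monomial_def
    by (rule prod.mono_neutral_cong_left) (use assms(2) in auto)
  then show ?thesis
    by (intro polynomial_inI[of S _ c _ _ "\<lambda>e k. if k \<le> m then e k else 0"]) (auto simp: S)
qed

lemma polynomial_in_newton_recursion:
  assumes lam: "\<And>m. polynomial_in P (m div 2) (lam m)"
    and rec: "\<And>N x. of_nat (N + 1) * phi (N + 1) x = (\<Sum>k=0..N. phi k x * lam (N - k) x)"
    and phi_0: "\<And>x. phi 0 x = 1"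
  shows "polynomial_in P (N div 2) (phi (N + 1))"
proof (induction N rule: less_induct)
  case (less N)
  have "polynomial_in P (N div 2) (\<lambda>x. phi k x * lam (N - k) x)" if "k \<in> {0..N}" for k
  proof (rule polynomial_in_mult)
    show "polynomial_in P (N div 2) (lam (N - k))"
      by (rule polynomial_in_mono[OF lam]) (simp add: div_le_mono)
    show "polynomial_in P (N div 2) (phi k)"
    proof (cases k)
      case 0
      have "phi 0 = (\<lambda>x. 1)" by (simp add: fun_eq_iff phi_0)
      then show ?thesis using 0 polynomial_in_const[of P "N div 2" 1] by simp
    next
      case (Suc j)
      with that have "j < N" by simp
      then show ?thesis
        using less.IH[of j] Suc by (auto intro: polynomial_in_mono div_le_mono)
    qed
  qed
  then have "polynomial_in P (N div 2) (\<lambda>x. 1 / of_nat (N + 1) * (\<Sum>k=0..N. phi k x * lam (N - k) x))"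
    by (intro polynomial_in_scale polynomial_in_sum) auto
  moreover have "phi (N + 1) = (\<lambda>x. 1 / of_nat (N + 1) * (\<Sum>k=0..N. phi k x * lam (N - k) x))"
    using rec[of N] by (auto simp: fun_eq_iff field_simps simp del: of_nat_Suc)
  ultimately show ?case by simp
qed

section \<open>Partial fractions of \<open>\<Prod>\<^sub>i (1 - 1/(z - l\<^sub>i))\<close>\<close>

definition pf_weight :: "nat set \<Rightarrow> (nat \<Rightarrow> complex) \<Rightarrow> nat \<Rightarrow> complex" where
  "pf_weight A l i = (\<Prod>j\<in>A - {i}. 1 - 1 / (l i - l j))"

text \<open>
  The inductive step shared by the scalar and the formal power series expansion: inserting a
  factor \<open>1 - \<beta>\<close> into \<open>1 - \<Sum>\<^sub>i w\<^sub>i G\<^sub>i\<close>, where \<open>G\<^sub>i \<beta> = d\<^sub>i (G\<^sub>i - \<beta>)\<close> is the relation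
  \<open>1/(z - a) \<cdot> 1/(z - b) = 1/(a - b) \<cdot> (1/(z - a) - 1/(z - b))\<close>.
\<close>
lemma one_minus_mult_one_minus_sum:
  fixes G :: "nat \<Rightarrow> 'a::comm_ring_1"
  assumes "\<And>i. i \<in> F \<Longrightarrow> G i * \<beta> = d i * (G i - \<beta>)"
  shows "(1 - \<beta>) * (1 - (\<Sum>i\<in>F. w i * G i)) =
         1 - (\<Sum>i\<in>F. (w i * (1 - d i)) * G i) - (1 + (\<Sum>i\<in>F. w i * d i)) * \<beta>"
proof -
  have "(\<Sum>i\<in>F. w i * G i) * \<beta> = (\<Sum>i\<in>F. w i * d i * G i - w i * d i * \<beta>)"
    unfolding sum_distrib_right
  proof (intro sum.cong refl)
    fix i assume "i \<in> F"
    then have "w i * G i * \<beta> = w i * (d i * (G i - \<beta>))" by (simp add: assms mult.assoc)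
    then show "w i * G i * \<beta> = w i * d i * G i - w i * d i * \<beta>" by (simp add: algebra_simps)
  qed
  then show ?thesis
    by (simp add: algebra_simps sum_subtractf sum.distrib sum_distrib_left sum_distrib_right)
qed

lemma pf_weight_insert_other:
  assumes "finite F" "b \<notin> F" "i \<in> F"
  shows "pf_weight (insert b F) l i = pf_weight F l i * (1 - 1 / (l i - l b))"
proof -
  have "insert b F - {i} = insert b (F - {i})" using assms by auto
  then show ?thesis unfolding pf_weight_def using assms by (simp add: mult.commute)
qed

text \<open>The new weight is the old product evaluated at the new pole \<open>z = l b\<close>.\<close>
lemma pf_weight_insert_self:
  assumes "b \<notin> F"
    and "(\<Prod>j\<in>F. 1 - 1 / (l b - l j)) = 1 - (\<Sum>i\<in>F. pf_weight F l i * (1 / (l b - l i)))"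
  shows "pf_weight (insert b F) l b = 1 + (\<Sum>i\<in>F. pf_weight F l i * (1 / (l i - l b)))"
proof -
  have "pf_weight (insert b F) l b = (\<Prod>j\<in>F. 1 - 1 / (l b - l j))"
    unfolding pf_weight_def using assms(1) by (metis Diff_insert_absorb)
  also have "\<dots> = 1 + (\<Sum>i\<in>F. pf_weight F l i * (1 / (l i - l b)))"
    by (simp add: assms(2) sum_negf[symmetric] minus_divide_right)
  finally show ?thesis .
qed

lemma prod_one_minus_inverse_partial_fractions:
  assumes "finite A" "inj_on l A" "z \<notin> l ` A"
  shows "(\<Prod>i\<in>A. 1 - 1 / (z - l i)) = 1 - (\<Sum>i\<in>A. pf_weight A l i * (1 / (z - l i)))"
  using assms
proof (induction A arbitrary: z rule: finite_induct)
  case empty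
  then show ?case by simp
next
  case (insert b F)
  have injF: "inj_on l F" and lb: "l b \<notin> l ` F" using insert by auto
  have kernel: "1 / (z - l i) * (1 / (z - l b)) = 1 / (l i - l b) * (1 / (z - l i) - 1 / (z - l b))"
    if "i \<in> F" for i
  proof -
    have "l i \<noteq> l b" using that lb by (metis image_eqI)
    moreover have "z \<noteq> l i" "z \<noteq> l b" using that insert.prems by auto
    ultimately show ?thesis by (simp add: field_simps)
  qed
  have "(\<Prod>i\<in>insert b F. 1 - 1 / (z - l i)) =
        (1 - 1 / (z - l b)) * (1 - (\<Sum>i\<in>F. pf_weight F l i * (1 / (z - l i))))"
    using insert injF by simp
  also have "\<dots> = 1 - (\<Sum>i\<in>F. (pf_weight F l i * (1 - 1 / (l i - l b))) * (1 / (z - l i)))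
       - (1 + (\<Sum>i\<in>F. pf_weight F l i * (1 / (l i - l b)))) * (1 / (z - l b))"
    by (rule one_minus_mult_one_minus_sum) (rule kernel)
  also have "\<dots> = 1 - (\<Sum>i\<in>insert b F. pf_weight (insert b F) l i * (1 / (z - l i)))"
    using insert insert.IH[OF injF lb]
    by (simp add: pf_weight_insert_self pf_weight_insert_other)
  finally show ?case .
qed

section \<open>The generating series of the Casimir eigenvalues\<close>

unbundle fps_syntax

definition geometric_fps :: "complex \<Rightarrow> complex fps" where
  "geometric_fps a = Abs_fps (\<lambda>n. a ^ n)"

text \<open>\<open>X/(1 - a X)\<close>, i.e.\ \<open>1/(z - a)\<close> expanded in \<open>X = 1/z\<close>.\<close>
definition pole_fps :: "complex \<Rightarrow> complex fps" where
  "pole_fps a = fps_X * geometric_fps a"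

text \<open>The logarithmic derivative of \<open>1 - pole_fps a = (1 - (a + 1) X)/(1 - a X)\<close>.\<close>
definition pole_factor_dlog :: "complex \<Rightarrow> complex fps" where
  "pole_factor_dlog a = fps_const a * geometric_fps a - fps_const (a + 1) * geometric_fps (a + 1)"

lemma geometric_fps_mult_inverse: "geometric_fps a * (1 - fps_const a * fps_X) = 1"
proof -
  have "geometric_fps a * (1 - fps_const a * fps_X) = geometric_fps a - fps_const a * (fps_X * geometric_fps a)"
    by (simp add: algebra_simps)
  also have "\<dots> = 1"
    by (rule fps_ext) (auto simp: geometric_fps_def power_Suc[symmetric] simp del: power_Suc)
  finally show ?thesis .
qed

lemma pole_fps_nth [simp]: "pole_fps a $ 0 = 0" "pole_fps a $ Suc q = a ^ q"
  by (auto simp: pole_fps_def geometric_fps_def)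

lemma pole_factor_dlog_nth: "pole_factor_dlog a $ m = a ^ (m + 1) - (a + 1) ^ (m + 1)"
  by (simp add: pole_factor_dlog_def geometric_fps_def)

lemma pole_fps_mult:
  assumes "a \<noteq> b"
  shows "pole_fps a * pole_fps b = fps_const (1 / (a - b)) * (pole_fps a - pole_fps b)"
proof -
  let ?G = geometric_fps
  have "?G a - ?G b = ?G a * ?G b * (1 - fps_const b * fps_X) - ?G a * ?G b * (1 - fps_const a * fps_X)"
    using geometric_fps_mult_inverse[of a] geometric_fps_mult_inverse[of b]
    by (metis mult.assoc mult.commute mult.right_neutral)
  also have "\<dots> = fps_const (a - b) * fps_X * ?G a * ?G b"
    by (simp add: algebra_simps fps_const_sub[symmetric] del: fps_const_sub)
  finally have diff: "?G a - ?G b = fps_const (a - b) * fps_X * ?G a * ?G b" .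
  have "fps_const (1 / (a - b)) * (pole_fps a - pole_fps b) =
        fps_const (1 / (a - b)) * fps_const (a - b) * (fps_X * fps_X * ?G a * ?G b)"
    unfolding pole_fps_def by (simp add: right_diff_distrib[symmetric] diff mult.assoc mult.left_commute)
  also have "\<dots> = pole_fps a * pole_fps b" using assms by (simp add: pole_fps_def algebra_simps)
  finally show ?thesis by simp
qed

lemma fps_const_sum: "fps_const (\<Sum>i\<in>F. f i) = (\<Sum>i\<in>F. fps_const (f i))"
  by (induction F rule: infinite_finite_induct) (simp_all flip: fps_const_add)

lemma prod_one_minus_pole_fps_partial_fractions:
  assumes "finite A" "inj_on l A"
  shows "(\<Prod>i\<in>A. 1 - pole_fps (l i)) = 1 - (\<Sum>i\<in>A. fps_const (pf_weight A l i) * pole_fps (l i))"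
  using assms
proof (induction A rule: finite_induct)
  case empty
  then show ?case by simp
next
  case (insert b F)
  have injF: "inj_on l F" and lb: "l b \<notin> l ` F" using insert by auto
  have "(\<Prod>i\<in>insert b F. 1 - pole_fps (l i)) =
        (1 - pole_fps (l b)) * (1 - (\<Sum>i\<in>F. fps_const (pf_weight F l i) * pole_fps (l i)))"
    using insert injF by simp
  also have "\<dots> = 1 - (\<Sum>i\<in>F. (fps_const (pf_weight F l i) * (1 - fps_const (1 / (l i - l b)))) * pole_fps (l i))
       - (1 + (\<Sum>i\<in>F. fps_const (pf_weight F l i) * fps_const (1 / (l i - l b)))) * pole_fps (l b)"
  proof (rule one_minus_mult_one_minus_sum)
    fix i assume "i \<in> F"
    then have "l i \<noteq> l b" using lb by (metis image_eqI)
    then show "pole_fps (l i) * pole_fps (l b) = fps_const (1 / (l i - l b)) * (pole_fps (l i) - pole_fps (l b))"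
      by (rule pole_fps_mult)
  qed
  also have "1 + (\<Sum>i\<in>F. fps_const (pf_weight F l i) * fps_const (1 / (l i - l b))) =
             fps_const (pf_weight (insert b F) l b)"
    unfolding pf_weight_insert_self[OF insert(2) prod_one_minus_inverse_partial_fractions[OF insert(1) injF lb]]
    by (simp only: fps_const_mult fps_const_sum[symmetric] fps_const_add fps_const_1_eq_1[symmetric])
  also have "(\<Sum>i\<in>F. (fps_const (pf_weight F l i) * (1 - fps_const (1 / (l i - l b)))) * pole_fps (l i)) =
             (\<Sum>i\<in>F. fps_const (pf_weight (insert b F) l i) * pole_fps (l i))"
    using insert by (intro sum.cong refl) (simp add: pf_weight_insert_other algebra_simps)
  finally show ?case using insert by (simp add: algebra_simps)
qed

lemma prod_one_minus_pole_fps_nth_Suc: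
  assumes "finite A" "inj_on l A"
  shows "(\<Prod>i\<in>A. 1 - pole_fps (l i)) $ Suc q = - (\<Sum>i\<in>A. pf_weight A l i * l i ^ q)"
  unfolding prod_one_minus_pole_fps_partial_fractions[OF assms] by (simp add: fps_sum_nth)

lemma prod_one_minus_pole_fps_nth_0: "(\<Prod>i\<in>A. 1 - pole_fps (l i)) $ 0 = 1"
proof (induction A rule: infinite_finite_induct)
  case (insert b F)
  then show ?case by (simp add: fps_mult_nth)
qed auto

lemma fps_deriv_geometric_fps: "fps_deriv (geometric_fps a) = fps_const a * geometric_fps a * geometric_fps a"
proof -
  let ?G = "geometric_fps a" and ?Q = "1 - fps_const a * fps_X"
  have "fps_deriv (?G * ?Q) = 0" using geometric_fps_mult_inverse[of a] by simp
  then have QG: "fps_deriv ?G * ?Q = fps_const a * ?G" by (simp add: algebra_simps)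
  have "fps_deriv ?G = fps_deriv ?G * ?Q * ?G"
    using geometric_fps_mult_inverse[of a] by (simp add: mult.assoc mult.commute)
  then show ?thesis by (simp only: QG)
qed

lemma one_minus_pole_fps_eq: "1 - pole_fps a = (1 - fps_const (a + 1) * fps_X) * geometric_fps a"
proof -
  have "(1 - fps_const (a + 1) * fps_X) * geometric_fps a =
        geometric_fps a * (1 - fps_const a * fps_X) - fps_X * geometric_fps a"
    by (simp add: algebra_simps flip: fps_const_add)
  then show ?thesis using geometric_fps_mult_inverse[of a] by (simp add: pole_fps_def)
qed

lemma fps_deriv_one_minus_pole_fps: "fps_deriv (1 - pole_fps a) = (1 - pole_fps a) * pole_factor_dlog a"
proof -
  let ?G = geometric_fps
  define P where "P = 1 - fps_const (a + 1) * fps_X"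
  have PG: "P * ?G (a + 1) = 1" using geometric_fps_mult_inverse[of "a + 1"] by (simp add: P_def mult.commute)
  have "fps_deriv (1 - pole_fps a) = fps_deriv (P * ?G a)" by (simp add: one_minus_pole_fps_eq P_def)
  also have "\<dots> = - fps_const (a + 1) * ?G a + P * (fps_const a * ?G a * ?G a)"
    by (simp add: P_def fps_deriv_geometric_fps)
  also have "\<dots> = fps_const a * P * ?G a * ?G a - fps_const (a + 1) * ?G a * (P * ?G (a + 1))"
    by (simp only: PG) (simp add: algebra_simps del: fps_const_neg)
  also have "\<dots> = P * ?G a * pole_factor_dlog a" by (simp add: pole_factor_dlog_def algebra_simps)
  finally show ?thesis by (simp add: one_minus_pole_fps_eq P_def)
qed

lemma fps_deriv_prod_one_minus_pole_fps:
  assumes "finite A"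
  shows "fps_deriv (\<Prod>i\<in>A. 1 - pole_fps (l i)) = (\<Prod>i\<in>A. 1 - pole_fps (l i)) * (\<Sum>i\<in>A. pole_factor_dlog (l i))"
  using assms
proof (induction A rule: finite_induct)
  case empty
  then show ?case by simp
next
  case (insert b F)
  let ?Q = "\<Prod>i\<in>F. 1 - pole_fps (l i)"
  have "fps_deriv ((1 - pole_fps (l b)) * ?Q) =
        fps_deriv (1 - pole_fps (l b)) * ?Q + (1 - pole_fps (l b)) * fps_deriv ?Q"
    by (simp only: fps_deriv_mult add.commute)
  also have "\<dots> = ((1 - pole_fps (l b)) * ?Q) * (pole_factor_dlog (l b) + (\<Sum>i\<in>F. pole_factor_dlog (l i)))"
    by (simp only: fps_deriv_one_minus_pole_fps insert.IH) (simp add: algebra_simps)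
  finally show ?case using insert by simp
qed

text \<open>Coefficientwise form of \<open>\<Phi>' = \<Phi> \<cdot> \<Sum>\<^sub>i pole_factor_dlog (l\<^sub>i)\<close>: Newton's identities for \<open>\<Phi>\<close>.\<close>
lemma prod_one_minus_pole_fps_recursion:
  assumes "finite A"
  shows "of_nat (N + 1) * (\<Prod>i\<in>A. 1 - pole_fps (l i)) $ (N + 1) =
     (\<Sum>k=0..N. (\<Prod>i\<in>A. 1 - pole_fps (l i)) $ k * (\<Sum>j\<in>A. l j ^ (N - k + 1) - (l j + 1) ^ (N - k + 1)))"
  using arg_cong[OF fps_deriv_prod_one_minus_pole_fps[OF assms], of "\<lambda>f. f $ N"]
  by (simp add: fps_mult_nth fps_sum_nth pole_factor_dlog_nth)

lemma casimir_generic_inj_on: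
  assumes "casimir_generic n \<nu>"
  shows "inj_on (\<lambda>i. \<nu> i + of_nat n - of_nat i) {1..n}"
proof (rule inj_onI, rule ccontr)
  fix i j assume "i \<in> {1..n}" "j \<in> {1..n}" "\<nu> i + of_nat n - of_nat i = \<nu> j + of_nat n - of_nat j" "i \<noteq> j"
  then show False using assms unfolding casimir_generic_def by (auto simp: algebra_simps)
qed

lemma casimir_c_eq_coeff:
  assumes "casimir_generic n \<nu>"
  shows "casimir_c n p \<nu> = - (\<Prod>i\<in>{1..n}. 1 - pole_fps (\<nu> i + of_nat n - of_nat i)) $ Suc p"
proof -
  let ?l = "\<lambda>i. \<nu> i + of_nat n - of_nat i"
  have "casimir_c n p \<nu> = (\<Sum>i\<in>{1..n}. pf_weight {1..n} ?l i * ?l i ^ p)"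
    unfolding casimir_c_def pf_weight_def
    by (intro sum.cong refl) (simp add: mult.commute algebra_simps)
  then show ?thesis
    using prod_one_minus_pole_fps_nth_Suc[OF finite_atLeastAtMost casimir_generic_inj_on[OF assms]]
    by simp
qed

section \<open>Power sums of the restricted weight\<close>

definition shifted_even_psum :: "nat \<Rightarrow> nat \<Rightarrow> nat \<Rightarrow> (nat \<Rightarrow> complex) \<Rightarrow> complex" where
  "shifted_even_psum r n k x = psum r (2 * k) (\<lambda>j. x j + rho n j)"

lemma rho_reflect:
  assumes "1 \<le> k" "k \<le> n"
  shows "rho n (n + 1 - k) = - rho n k"
proof -
  have "of_nat (n + 1 - k) = (of_nat n + 1 - of_nat k :: complex)" using assms by (simp add: of_nat_diff)
  then show ?thesis unfolding rho_def by (simp only:) (simp add: field_simps)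
qed

lemma sum_restr_weight_rho_power:
  assumes "2 * r \<le> n"
  shows "(\<Sum>i\<in>{1..n}. (restr_weight n r x i + rho n i) ^ j) =
     (1 + (-1) ^ j) * psum r j (\<lambda>k. x k + rho n k) + (\<Sum>i\<in>{r+1..n-r}. rho n i ^ j)"
proof -
  let ?f = "\<lambda>i. (restr_weight n r x i + rho n i) ^ j"
  have "sum ?f {1..n} = sum ?f {1..r} + sum ?f {r+1..n-r} + sum ?f {n-r+1..n}"
    using sum.ub_add_nat[of 1 r ?f "n - r"] sum.ub_add_nat[of "r+1" "n-r" ?f r] assms by simp
  moreover have "sum ?f {1..r} = psum r j (\<lambda>k. x k + rho n k)"
    unfolding psum_def by (intro sum.cong refl) (simp add: restr_weight_def)
  moreover have "sum ?f {r+1..n-r} = (\<Sum>i\<in>{r+1..n-r}. rho n i ^ j)"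
    by (intro sum.cong refl) (simp add: restr_weight_def)
  moreover have "sum ?f {n-r+1..n} = (-1) ^ j * psum r j (\<lambda>k. x k + rho n k)"
  proof -
    have "sum ?f {n-r+1..n} = (\<Sum>k\<in>{1..r}. ?f (n + 1 - k))"
      by (rule sum.reindex_bij_witness[of _ "\<lambda>i. n + 1 - i" "\<lambda>k. n + 1 - k"]) (use assms in auto)
    also have "\<dots> = (\<Sum>k\<in>{1..r}. (-1) ^ j * (x k + rho n k) ^ j)"
    proof (intro sum.cong refl)
      fix k assume k: "k \<in> {1..r}"
      have "restr_weight n r x (n + 1 - k) = - x k" using k assms by (auto simp: restr_weight_def)
      moreover have "rho n (n + 1 - k) = - rho n k" using k assms by (intro rho_reflect) auto
      ultimately show "?f (n + 1 - k) = (-1) ^ j * (x k + rho n k) ^ j"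
        by (simp flip: power_mult_distrib)
    qed
    finally show ?thesis by (simp add: psum_def sum_distrib_left)
  qed
  ultimately show ?thesis by (simp add: algebra_simps)
qed

lemma polynomial_in_sum_restr_weight_rho_power:
  assumes "2 * r \<le> n"
  shows "polynomial_in (shifted_even_psum r n) (j div 2)
           (\<lambda>x. \<Sum>i\<in>{1..n}. (restr_weight n r x i + rho n i) ^ j)"
proof -
  have "polynomial_in (shifted_even_psum r n) (j div 2) (\<lambda>x. (1 + (-1) ^ j) * psum r j (\<lambda>k. x k + rho n k))"
  proof (cases "odd j \<or> j = 0")
    case True
    then show ?thesis
      using polynomial_in_const[of "shifted_even_psum r n" "j div 2" "2 * of_nat r"]
        polynomial_in_const[of "shifted_even_psum r n" "j div 2" 0]
      by (auto simp: psum_def)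
  next
    case False
    then have "polynomial_in (shifted_even_psum r n) (j div 2) (shifted_even_psum r n (j div 2))"
      by (intro polynomial_in_generator) auto
    moreover have "shifted_even_psum r n (j div 2) = (\<lambda>x. psum r j (\<lambda>k. x k + rho n k))"
      using False by (simp add: shifted_even_psum_def fun_eq_iff)
    ultimately show ?thesis by (simp add: polynomial_in_scale)
  qed
  then show ?thesis
    unfolding sum_restr_weight_rho_power[OF assms] by (intro polynomial_in_add polynomial_in_const)
qed

text \<open>\<open>\<nu>\<^sub>i + n - i = (\<nu>\<^sub>i + \<rho>\<^sub>i) + (n - 1)/2\<close>, so binomial expansion reduces to the previous lemma.\<close>
lemma polynomial_in_sum_restr_weight_shift_power:
  assumes "2 * r \<le> n"
  shows "polynomial_in (shifted_even_psum r n) (k div 2)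
           (\<lambda>x. \<Sum>i\<in>{1..n}. (restr_weight n r x i + of_nat n - of_nat i) ^ k)"
proof -
  define s :: complex where "s = (of_nat n - 1) / 2"
  have shift: "restr_weight n r x i + of_nat n - of_nat i = (restr_weight n r x i + rho n i) + s" for x i
    by (simp add: rho_def s_def field_simps)
  have binomial_expand: "(a + s) ^ k = (\<Sum>j\<le>k. of_nat (k choose j) * s ^ (k - j) * a ^ j)" for a
    by (simp add: binomial_ring algebra_simps)
  have "(\<Sum>i\<in>{1..n}. (restr_weight n r x i + of_nat n - of_nat i) ^ k) =
     (\<Sum>j\<le>k. of_nat (k choose j) * s ^ (k - j) * (\<Sum>i\<in>{1..n}. (restr_weight n r x i + rho n i) ^ j))" for x
    unfolding shift binomial_expand sum_distrib_left by (rule sum.swap)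
  moreover have "polynomial_in (shifted_even_psum r n) (k div 2) (\<lambda>x.
      \<Sum>j\<le>k. of_nat (k choose j) * s ^ (k - j) * (\<Sum>i\<in>{1..n}. (restr_weight n r x i + rho n i) ^ j))"
    by (intro polynomial_in_sum polynomial_in_scale
          polynomial_in_mono[OF polynomial_in_sum_restr_weight_rho_power[OF assms]])
       (auto intro: div_le_mono)
  ultimately show ?thesis by simp
qed

lemma power_Suc_diff_binomial:
  fixes a :: "'a::comm_ring_1"
  shows "a ^ (m + 1) - (a + 1) ^ (m + 1) = (\<Sum>k\<le>m. - of_nat (m + 1 choose k) * a ^ k)"
proof -
  have "(a + 1) ^ (m + 1) = (\<Sum>k\<le>m. of_nat (m + 1 choose k) * a ^ k) + a ^ (m + 1)"
    using binomial_ring[of a 1 "m + 1"] by simp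
  then show ?thesis by (simp add: sum_negf)
qed

lemma polynomial_in_newton_coefficient:
  assumes "2 * r \<le> n"
  shows "polynomial_in (shifted_even_psum r n) (m div 2) (\<lambda>x.
     \<Sum>i\<in>{1..n}. (restr_weight n r x i + of_nat n - of_nat i) ^ (m + 1)
                 - (restr_weight n r x i + of_nat n - of_nat i + 1) ^ (m + 1))"
proof -
  have "polynomial_in (shifted_even_psum r n) (m div 2) (\<lambda>x.
     \<Sum>k\<le>m. - of_nat (m + 1 choose k) * (\<Sum>i\<in>{1..n}. (restr_weight n r x i + of_nat n - of_nat i) ^ k))"
    by (intro polynomial_in_sum polynomial_in_scale
          polynomial_in_mono[OF polynomial_in_sum_restr_weight_shift_power[OF assms]])
       (auto intro: div_le_mono)
  then show ?thesis
    by (simp only: power_Suc_diff_binomial sum_distrib_left) (subst sum.swap, simp)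
qed

theorem mainTheorem3:
  fixes r n p :: nat
  assumes "r \<ge> 1" and "n \<ge> 2 * r" and "p \<ge> 1"
  shows "\<exists>(S :: (nat \<Rightarrow> nat) set) (c :: (nat \<Rightarrow> nat) \<Rightarrow> complex). finite S \<and>
     (\<forall>x :: nat \<Rightarrow> complex. casimir_generic n (restr_weight n r x) \<longrightarrow>
        casimir_c n p (restr_weight n r x) =
        (\<Sum>e\<in>S. c e * (\<Prod>k\<in>{1..p div 2}. psum r (2 * k) (\<lambda>j. x j + rho n j) ^ e k)))"
proof -
  define l where "l x i = restr_weight n r x i + of_nat n - of_nat i" for x i
  define \<Phi> where "\<Phi> N x = (\<Prod>i\<in>{1..n}. 1 - pole_fps (l x i)) $ N" for N x
  have "polynomial_in (shifted_even_psum r n) (p div 2) (\<Phi> (p + 1))"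
  proof (rule polynomial_in_newton_recursion)
    show "polynomial_in (shifted_even_psum r n) (m div 2)
            (\<lambda>x. \<Sum>j\<in>{1..n}. l x j ^ (m + 1) - (l x j + 1) ^ (m + 1))" for m
      unfolding l_def using polynomial_in_newton_coefficient[OF assms(2)] .
  qed (unfold \<Phi>_def, rule prod_one_minus_pole_fps_recursion, simp, rule prod_one_minus_pole_fps_nth_0)
  then obtain S c where "finite S"
    and S: "\<And>x. \<Phi> (p + 1) x = (\<Sum>e\<in>S. c e * gen_monomial (shifted_even_psum r n) (p div 2) e x)"
    by (elim polynomial_inE) blast
  have "casimir_c n p (restr_weight n r x) =
          (\<Sum>e\<in>S. - c e * (\<Prod>k\<in>{1..p div 2}. psum r (2 * k) (\<lambda>j. x j + rho n j) ^ e k))"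
    if "casimir_generic n (restr_weight n r x)" for x
  proof -
    have "casimir_c n p (restr_weight n r x) = - \<Phi> (p + 1) x"
      using casimir_c_eq_coeff[OF that] by (simp add: \<Phi>_def l_def)
    then show ?thesis using S[of x] by (simp add: sum_negf gen_monomial_def shifted_even_psum_def)
  qed
  with \<open>finite S\<close> show ?thesis by (intro exI[of _ S] exI[of _ "\<lambda>e. - c e"]) simp
qed

end
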